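(* Let $p\ge 2$ be an integer. If there exist constants $\alpha,\beta$ such that $\mathrm{conv}^{\leq p}_{\mathcal F}(n)\le \alpha n+\beta$ for every nonnegative integer $n$, then $\mathrm{id}^{\leq p}_{\mathcal F}(n)\le \alpha n+2\beta$ for every nonnegative integer $n$.
   Context: All graphs are finite and simple. For an oriented graph $D$ and $X\subseteq V(D)$, the inversion of $X$ reverses every arc with both endvertices in $X$; a $(\leq p)$-inversion is the inversion of a set of at most $p$ vertices. $\mathrm{id}^{\leq p}(G)$ is the maximum, over all ordered pairs $(\vec G_1,\vec G_2)$ of orientations of $G$, of the minimum number of $(\leq p)$-inversions transforming $\vec G_1$ into $\vec G_2$. $\mathrm{conv}^{\leq p}(G)$ is the minimum number of $(\leq p)$-inversions transforming an orientation of $G$ into its converse (all arcs reversed); it does not depend on the orientation. $\mathrm{id}^{\leq p}_{\mathcal F}(n)$ (resp. $\mathrm{conv}^{\leq p}_{\mathcal F}(n)$) is the maximum of $\mathrm{id}^{\leq p}(F)$ (resp. $\mathrm{conv}^{\leq p}(F)$) over all forests $F$ of order $n$. *)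

theory Defs
  imports Main "HOL-Library.Extended_Real"
begin

definition simple_graph :: "'a set \<Rightarrow> 'a set set \<Rightarrow> bool" where
  "simple_graph V E \<longleftrightarrow> finite V \<and> (\<forall>e\<in>E. \<exists>u v. u \<in> V \<and> v \<in> V \<and> u \<noteq> v \<and> e = {u, v})"

definition is_cycle :: "'a set set \<Rightarrow> 'a list \<Rightarrow> bool" where
  "is_cycle E vs \<longleftrightarrow> length vs \<ge> 3 \<and> distinct vs \<and>
     (\<forall>i. Suc i < length vs \<longrightarrow> {vs ! i, vs ! Suc i} \<in> E) \<and>
     {last vs, hd vs} \<in> E"

definition forest :: "'a set \<Rightarrow> 'a set set \<Rightarrow> bool" where
  "forest V E \<longleftrightarrow> simple_graph V E \<and> \<not> (\<exists>vs. is_cycle E vs)"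

definition orientation :: "'a set set \<Rightarrow> ('a \<times> 'a) set \<Rightarrow> bool" where
  "orientation E A \<longleftrightarrow> (\<forall>(u,v)\<in>A. {u, v} \<in> E) \<and>
     (\<forall>u v. {u, v} \<in> E \<longrightarrow> u \<noteq> v \<longrightarrow> ((u,v) \<in> A \<longleftrightarrow> (v,u) \<notin> A))"

definition invert :: "'a set \<Rightarrow> ('a \<times> 'a) set \<Rightarrow> ('a \<times> 'a) set" where
  "invert X A = {(u,v) \<in> A. \<not> (u \<in> X \<and> v \<in> X)} \<union> {(v,u) | u v. (u,v) \<in> A \<and> u \<in> X \<and> v \<in> X}"

definition converse_dg :: "('a \<times> 'a) set \<Rightarrow> ('a \<times> 'a) set" where
  "converse_dg A = {(v,u) | u v. (u,v) \<in> A}"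

text \<open>Minimum number of (\<le>p)-inversions (sets of at most p vertices of V) transforming
  A1 into A2 (infinity if impossible).\<close>
definition inv_dist :: "nat \<Rightarrow> 'a set \<Rightarrow> ('a \<times> 'a) set \<Rightarrow> ('a \<times> 'a) set \<Rightarrow> enat" where
  "inv_dist p V A1 A2 = (INF Xs \<in> {Xs. (\<forall>X\<in>set Xs. X \<subseteq> V \<and> card X \<le> p) \<and>
        fold invert Xs A1 = A2}. enat (length Xs))"

definition idp :: "nat \<Rightarrow> 'a set \<Rightarrow> 'a set set \<Rightarrow> enat" where
  "idp p V E = (SUP (A1, A2) \<in> {(A1, A2). orientation E A1 \<and> orientation E A2}. inv_dist p V A1 A2)"

text \<open>conv does not depend on the orientation; we take the supremum over all orientations
  (all values coincide).\<close>
definition convp :: "nat \<Rightarrow> 'a set \<Rightarrow> 'a set set \<Rightarrow> enat" where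
  "convp p V E = (SUP A \<in> {A. orientation E A}. inv_dist p V A (converse_dg A))"

text \<open>Forests of order n, taken (up to isomorphism) on vertex set {0..<n}.\<close>
definition id_forest :: "nat \<Rightarrow> nat \<Rightarrow> enat" where
  "id_forest p n = (SUP E \<in> {E. forest {..<n} E}. idp p {..<n} E)"

definition conv_forest :: "nat \<Rightarrow> nat \<Rightarrow> enat" where
  "conv_forest p n = (SUP E \<in> {E. forest {..<n} E}. convp p {..<n} E)"

end

theory Submission
  imports Defs "HOL-Library.Transitive_Closure_Table"
begin

(* Since a forest has no cycles, every labelling of its edges is a coboundary: given two
   orientations, the vertices can be 2-coloured so that an edge is bichromatic exactly when
   the orientations agree on it. The arcs to be reversed are then exactly the arcs inside the
   two colour classes W1 and W2, and an inversion of a subset of one class never touches a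
   bichromatic edge. Reversing the induced forests on W1 and W2 costs at most
   (alpha |W1| + beta) + (alpha |W2| + beta) = alpha n + 2 beta inversions. *)

definition inversion_count :: "'a set list \<Rightarrow> 'a \<Rightarrow> 'a \<Rightarrow> nat" where
  "inversion_count Xs u v = length (filter (\<lambda>X. u \<in> X \<and> v \<in> X) Xs)"

lemma inversion_count_commute: "inversion_count Xs u v = inversion_count Xs v u"
  unfolding inversion_count_def by (metis (no_types, lifting) filter_cong)

lemma inversion_count_append:
  "inversion_count (Xs @ Ys) u v = inversion_count Xs u v + inversion_count Ys u v"
  by (simp add: inversion_count_def)

lemma inversion_count_eq_0:
  "\<forall>X\<in>set Xs. X \<subseteq> W \<Longrightarrow> u \<notin> W \<or> v \<notin> W \<Longrightarrow> inversion_count Xs u v = 0"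
  unfolding inversion_count_def by (auto simp: filter_empty_conv)

lemma inversion_count_image:
  assumes "inj_on g M" "\<forall>X\<in>set Xs. X \<subseteq> M" "x \<in> M" "y \<in> M"
  shows "inversion_count (map ((`) g) Xs) (g x) (g y) = inversion_count Xs x y"
proof -
  have "filter (\<lambda>X. g x \<in> g ` X \<and> g y \<in> g ` X) Xs = filter (\<lambda>X. x \<in> X \<and> y \<in> X) Xs"
    using assms by (intro filter_cong) (auto simp: inj_on_image_mem_iff)
  then show ?thesis
    unfolding inversion_count_def by (simp add: filter_map comp_def)
qed

lemma mem_invert_iff:
  "(u,v) \<in> invert X A \<longleftrightarrow> (if u \<in> X \<and> v \<in> X then (v,u) \<in> A else (u,v) \<in> A)"
  unfolding invert_def by auto

lemma mem_fold_invert_iff: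
  "(u,v) \<in> fold invert Xs A \<longleftrightarrow>
     (if even (inversion_count Xs u v) then (u,v) \<in> A else (v,u) \<in> A)"
proof (induction Xs arbitrary: A)
  case Nil
  then show ?case by (simp add: inversion_count_def)
next
  case (Cons X Xs)
  have "inversion_count (X # Xs) u v =
      (if u \<in> X \<and> v \<in> X then Suc (inversion_count Xs u v) else inversion_count Xs u v)"
    by (simp add: inversion_count_def)
  then show ?case
    using Cons[of "invert X A"] inversion_count_commute[of Xs v u] by (simp add: mem_invert_iff)
qed

lemma simple_graph_edgeD:
  "simple_graph V E \<Longrightarrow> {u,v} \<in> E \<Longrightarrow> u \<noteq> v \<and> u \<in> V \<and> v \<in> V"
  unfolding simple_graph_def by (fastforce simp: doubleton_eq_iff)

lemma orientation_edge_iff: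
  assumes "simple_graph V E" "orientation E A" "{u,v} \<in> E"
  shows "(u,v) \<in> A \<longleftrightarrow> (v,u) \<notin> A"
  using assms simple_graph_edgeD[OF assms(1,3)] unfolding orientation_def by blast

lemma orientation_less:
  fixes E :: "'a::linorder set set"
  shows "orientation E {(x,y). {x,y} \<in> E \<and> x < y}"
  unfolding orientation_def by (auto simp: insert_commute)

lemma fold_invert_eq_orientation:
  assumes "simple_graph V E" "orientation E A" "orientation E B"
    and parity: "\<And>u v. {u,v} \<in> E \<Longrightarrow> odd (inversion_count Xs u v) \<longleftrightarrow> ((u,v) \<in> A \<longleftrightarrow> (u,v) \<notin> B)"
  shows "fold invert Xs A = B"
proof (rule set_eqI, clarify)
  fix u v
  show "(u,v) \<in> fold invert Xs A \<longleftrightarrow> (u,v) \<in> B"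
  proof (cases "{u,v} \<in> E")
    case True
    then show ?thesis
      using parity[OF True] orientation_edge_iff[OF assms(1,2) True] orientation_edge_iff[OF assms(1,3) True]
      unfolding mem_fold_invert_iff by auto
  next
    case False
    then have "{v,u} \<notin> E" by (simp add: insert_commute)
    then show ?thesis
      using False assms(2,3) unfolding mem_fold_invert_iff orientation_def by auto
  qed
qed

lemma odd_inversion_count_if_fold_invert_converse:
  assumes "simple_graph V E" "orientation E A" "fold invert Xs A = converse_dg A" "{u,v} \<in> E"
  shows "odd (inversion_count Xs u v)"
proof -
  have "(u,v) \<in> A \<longleftrightarrow> (v,u) \<notin> A" by (rule orientation_edge_iff[OF assms(1,2,4)])
  moreover have "(u,v) \<in> fold invert Xs A \<longleftrightarrow> (v,u) \<in> A"
    using assms(3) unfolding converse_dg_def by auto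
  ultimately show ?thesis unfolding mem_fold_invert_iff by (auto split: if_splits)
qed

lemma is_cycle_mono: "is_cycle E vs \<Longrightarrow> E \<subseteq> E' \<Longrightarrow> is_cycle E' vs"
  unfolding is_cycle_def by blast

lemma is_cycle_map:
  assumes "is_cycle E vs" "inj_on g (set vs)" "\<And>a b. {a,b} \<in> E \<Longrightarrow> {g a, g b} \<in> E'"
  shows "is_cycle E' (map g vs)"
proof -
  have "vs \<noteq> []" using assms(1) unfolding is_cycle_def by auto
  then show ?thesis
    using assms unfolding is_cycle_def by (auto simp: distinct_map last_map hd_map)
qed

lemma in_edge_if_in_cycle:
  assumes "is_cycle E vs" "x \<in> set vs"
  shows "\<exists>e\<in>E. x \<in> e"
proof -
  obtain i where i: "i < length vs" "x = vs ! i" using assms(2) by (auto simp: in_set_conv_nth)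
  show ?thesis
  proof (cases "Suc i < length vs")
    case True
    then show ?thesis using assms(1) i unfolding is_cycle_def by blast
  next
    case False
    then have "i = length vs - 1" using i(1) by linarith
    moreover have "vs \<noteq> []" using i(1) by auto
    ultimately have "x = last vs" using i(2) by (simp add: last_conv_nth)
    then show ?thesis using assms(1) unfolding is_cycle_def by blast
  qed
qed

lemma forest_induced_preimage:
  assumes "forest V E" "finite M" "inj_on g M"
  shows "forest M {{x,y} | x y. x \<in> M \<and> y \<in> M \<and> {g x, g y} \<in> E}"
    (is "forest M ?E'")
proof -
  have sg: "simple_graph V E" and acyclic: "\<nexists>vs. is_cycle E vs"
    using assms(1) unfolding forest_def by auto
  have edge: "{g a, g b} \<in> E" if "{a,b} \<in> ?E'" for a b
    using that by (auto simp: doubleton_eq_iff insert_commute)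
  have "simple_graph M ?E'"
    unfolding simple_graph_def using assms(2) simple_graph_edgeD[OF sg] by fastforce
  moreover have "\<not> is_cycle ?E' vs" for vs
  proof
    assume cycle: "is_cycle ?E' vs"
    have "set vs \<subseteq> M" using in_edge_if_in_cycle[OF cycle] by blast
    then have "inj_on g (set vs)" using assms(3) inj_on_subset by blast
    then have "is_cycle E (map g vs)" using is_cycle_map[of ?E' vs g E] cycle edge by blast
    then show False using acyclic by blast
  qed
  ultimately show ?thesis unfolding forest_def by blast
qed

lemma not_connected_if_acyclic_insert:
  assumes acyclic: "\<nexists>vs. is_cycle (insert {a,b} E) vs" and new: "{a,b} \<notin> E" and "a \<noteq> b"
  shows "\<not> (\<lambda>x y. {x,y} \<in> E)\<^sup>*\<^sup>* a b"
proof
  let ?r = "\<lambda>x y. {x,y} \<in> E"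
  assume "?r\<^sup>*\<^sup>* a b"
  then obtain xs where "rtrancl_path ?r a xs b"
    by (auto simp: rtranclp_eq_rtrancl_path)
  then obtain xs' where path: "rtrancl_path ?r a xs' b" and dist: "distinct (a # xs')"
    by (rule rtrancl_path_distinct)
  have ne: "xs' \<noteq> []" using path \<open>a \<noteq> b\<close> by (auto elim: rtrancl_path.cases)
  have last: "last xs' = b" using rtrancl_path_last[OF path ne] .
  have "xs' \<noteq> [b]"
  proof
    assume "xs' = [b]"
    then have "?r a b" using path by (auto elim: rtrancl_path.cases)
    then show False using new by simp
  qed
  then have "length (a # xs') \<ge> 3" using ne last by (cases xs'; cases "tl xs'"; auto)
  moreover have "{(a # xs') ! i, (a # xs') ! Suc i} \<in> E" if "Suc i < length (a # xs')" for i
    using rtrancl_path_nth[OF path] that by simp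
  ultimately have "is_cycle (insert {a,b} E) (a # xs')"
    using dist ne last unfolding is_cycle_def by (auto simp: insert_commute)
  then show False using acyclic by blast
qed

lemma acyclic_labelling_coboundary:
  assumes "finite E" "\<forall>e\<in>E. \<exists>u v. u \<noteq> v \<and> e = {u,v}" "\<nexists>vs. is_cycle E vs"
  shows "\<exists>col::'a \<Rightarrow> bool. \<forall>u v. {u,v} \<in> E \<longrightarrow> (col u \<noteq> col v \<longleftrightarrow> d {u,v})"
  using assms
proof (induction E rule: finite_induct)
  case empty
  then show ?case by auto
next
  case (insert e E)
  obtain a b where ab: "a \<noteq> b" "e = {a,b}" using insert.prems(1) by blast
  have "\<nexists>vs. is_cycle E vs" using insert.prems(2) is_cycle_mono[of E _ "insert e E"] by blast
  moreover have "\<forall>e\<in>E. \<exists>u v. u \<noteq> v \<and> e = {u,v}" using insert.prems(1) by simp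
  ultimately obtain col :: "'a \<Rightarrow> bool"
    where col: "\<forall>u v. {u,v} \<in> E \<longrightarrow> (col u \<noteq> col v \<longleftrightarrow> d {u,v})"
    using insert.IH by blast
  have new_edge: "{u,v} \<in> insert e E \<longleftrightarrow> {u,v} \<in> E \<or> (u = a \<and> v = b) \<or> (u = b \<and> v = a)" for u v
    using ab by (auto simp: doubleton_eq_iff)
  show ?case
  proof (cases "col a \<noteq> col b \<longleftrightarrow> d {a,b}")
    case True
    show ?thesis
    proof (intro exI[of _ col] allI impI)
      fix u v assume "{u,v} \<in> insert e E"
      then consider "{u,v} \<in> E" | "{u,v} = {a,b}" using ab by blast
      then show "col u \<noteq> col v \<longleftrightarrow> d {u,v}"
        using col True by cases (auto simp: doubleton_eq_iff insert_commute)
    qed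
  next
    case False
    \<comment> \<open>flip the colour on the component of a, which by acyclicity does not contain b\<close>
    define R where "R = {w. (\<lambda>x y. {x,y} \<in> E)\<^sup>*\<^sup>* a w}"
    have R_closed: "u \<in> R \<longleftrightarrow> v \<in> R" if "{u,v} \<in> E" for u v
    proof -
      have "{v,u} \<in> E" using that by (simp add: insert_commute)
      then show ?thesis
        using that unfolding R_def by (auto intro: rtranclp.rtrancl_into_rtrancl)
    qed
    have "a \<in> R" unfolding R_def by simp
    have "b \<notin> R"
      using not_connected_if_acyclic_insert[of a b E] insert.prems(2) insert.hyps(2) ab
      unfolding R_def by blast
    show ?thesis
    proof (intro exI[of _ "\<lambda>w. if w \<in> R then \<not> col w else col w"] allI impI)
      fix u v assume "{u,v} \<in> insert e E"
      then consider "{u,v} \<in> E" | "u = a" "v = b" | "u = b" "v = a"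
        using new_edge by blast
      then show "(if u \<in> R then \<not> col u else col u) \<noteq> (if v \<in> R then \<not> col v else col v)
          \<longleftrightarrow> d {u,v}"
      proof cases
        case 1
        then show ?thesis using col R_closed[OF 1] by auto
      qed (use False \<open>a \<in> R\<close> \<open>b \<notin> R\<close> in \<open>auto simp: insert_commute\<close>)
    qed
  qed
qed

lemma inv_dist_le_length:
  assumes "\<forall>X\<in>set Xs. X \<subseteq> V \<and> card X \<le> p" "fold invert Xs A = B"
  shows "inv_dist p V A B \<le> enat (length Xs)"
  unfolding inv_dist_def by (rule INF_lower) (use assms in simp)

lemma ex_inversion_sequence_if_inv_dist_le:
  assumes "ereal_of_enat (inv_dist p V A B) \<le> ereal c"
  obtains Xs where "\<forall>X\<in>set Xs. X \<subseteq> V \<and> card X \<le> p" "fold invert Xs A = B"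
    "real (length Xs) \<le> c"
proof -
  obtain k where k: "inv_dist p V A B = enat k"
    using assms by (cases "inv_dist p V A B") auto
  then have "inv_dist p V A B < enat (Suc k)" by simp
  then obtain Xs where "(\<forall>X\<in>set Xs. X \<subseteq> V \<and> card X \<le> p) \<and> fold invert Xs A = B"
    and "length Xs < Suc k"
    unfolding inv_dist_def by (auto simp: INF_less_iff)
  moreover have "real k \<le> c" using assms k by simp
  ultimately show ?thesis using that by fastforce
qed

lemma ereal_of_enat_le_ereal_iff:
  assumes "0 \<le> c"
  shows "ereal_of_enat x \<le> ereal c \<longleftrightarrow> x \<le> enat (nat \<lfloor>c\<rfloor>)"
proof (cases x)
  case (enat k)
  have "real k \<le> c \<longleftrightarrow> k \<le> nat \<lfloor>c\<rfloor>"
    using le_nat_floor of_nat_floor[OF assms] by (metis of_nat_le_iff order_trans)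
  then show ?thesis using enat by simp
qed simp

lemma conv_forest_inversion_sequence:
  assumes "ereal_of_enat (conv_forest p m) \<le> ereal b" and forest: "forest {..<m} E"
  obtains Xs where "\<forall>X\<in>set Xs. X \<subseteq> {..<m} \<and> card X \<le> p"
    "\<And>u v. {u,v} \<in> E \<Longrightarrow> odd (inversion_count Xs u v)" "real (length Xs) \<le> b"
proof -
  let ?A = "{(x,y). {x,y} \<in> E \<and> x < y}"
  have orient: "orientation E ?A" by (rule orientation_less)
  have "inv_dist p {..<m} ?A (converse_dg ?A) \<le> convp p {..<m} E"
    unfolding convp_def by (rule SUP_upper) (simp add: orient)
  also have "\<dots> \<le> conv_forest p m"
    unfolding conv_forest_def by (rule SUP_upper) (simp add: forest)
  finally have "ereal_of_enat (inv_dist p {..<m} ?A (converse_dg ?A)) \<le> ereal b"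
    using assms(1) by (meson ereal_of_enat_le_iff order_trans)
  then obtain Xs where "\<forall>X\<in>set Xs. X \<subseteq> {..<m} \<and> card X \<le> p"
    "fold invert Xs ?A = converse_dg ?A" "real (length Xs) \<le> b"
    by (rule ex_inversion_sequence_if_inv_dist_le)
  moreover have "simple_graph {..<m} E" using forest unfolding forest_def by simp
  ultimately show ?thesis
    using that odd_inversion_count_if_fold_invert_converse[OF _ orient] by blast
qed

lemma inversion_sequence_within_subset:
  assumes conv: "\<forall>m. ereal_of_enat (conv_forest p m) \<le> ereal (\<alpha> * real m + \<beta>)"
    and forest: "forest V E" and "W \<subseteq> V"
  obtains Xs where "\<forall>X\<in>set Xs. X \<subseteq> W \<and> card X \<le> p"
    "\<And>u v. {u,v} \<in> E \<Longrightarrow> odd (inversion_count Xs u v) \<longleftrightarrow> u \<in> W \<and> v \<in> W"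
    "real (length Xs) \<le> \<alpha> * real (card W) + \<beta>"
proof -
  have "finite W"
    using forest \<open>W \<subseteq> V\<close> finite_subset unfolding forest_def simple_graph_def by blast
  then obtain g where g: "bij_betw g {..<card W} W"
    using ex_bij_betw_nat_finite by (fastforce simp: atLeast0LessThan)
  then have inj: "inj_on g {..<card W}" and img: "g ` {..<card W} = W"
    by (auto simp: bij_betw_def)
  define E' where "E' = {{x,y} | x y. x \<in> {..<card W} \<and> y \<in> {..<card W} \<and> {g x, g y} \<in> E}"
  have "forest {..<card W} E'"
    unfolding E'_def using forest_induced_preimage[OF forest _ inj] by simp
  then obtain Ys where Ys: "\<forall>Y\<in>set Ys. Y \<subseteq> {..<card W} \<and> card Y \<le> p"
    "\<And>x y. {x,y} \<in> E' \<Longrightarrow> odd (inversion_count Ys x y)"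
    "real (length Ys) \<le> \<alpha> * real (card W) + \<beta>"
    using conv conv_forest_inversion_sequence by blast
  define Xs where "Xs = map ((`) g) Ys"
  have "X \<subseteq> W \<and> card X \<le> p" if X: "X \<in> set Xs" for X
  proof -
    obtain Y where "Y \<in> set Ys" "X = g ` Y" using X unfolding Xs_def by auto
    then show ?thesis
      using Ys(1) img card_image_le[of Y g] finite_subset[of Y "{..<card W}"] by fastforce
  qed
  moreover have "odd (inversion_count Xs u v) \<longleftrightarrow> u \<in> W \<and> v \<in> W" if "{u,v} \<in> E" for u v
  proof (cases "u \<in> W \<and> v \<in> W")
    case True
    then have "u \<in> g ` {..<card W}" "v \<in> g ` {..<card W}" using img by auto
    then obtain x y where xy: "x < card W" "y < card W" "u = g x" "v = g y" by auto
    then have "{x,y} \<in> E'" using that unfolding E'_def by auto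
    moreover have "inversion_count Xs u v = inversion_count Ys x y"
      unfolding Xs_def xy using inversion_count_image[OF inj] Ys(1) xy by simp
    ultimately show ?thesis using Ys(2) True by simp
  next
    case False
    have "\<forall>X\<in>set Xs. X \<subseteq> W" using calculation by blast
    then have "inversion_count Xs u v = 0" using False by (simp add: inversion_count_eq_0)
    then show ?thesis using False by simp
  qed
  moreover have "real (length Xs) \<le> \<alpha> * real (card W) + \<beta>"
    using Ys(3) unfolding Xs_def by simp
  ultimately show ?thesis using that by blast
qed

lemma orientations_inversion_sequence:
  assumes conv: "\<forall>m. ereal_of_enat (conv_forest p m) \<le> ereal (\<alpha> * real m + \<beta>)"
    and forest: "forest V E" and A: "orientation E A" and B: "orientation E B"
  obtains Xs where "\<forall>X\<in>set Xs. X \<subseteq> V \<and> card X \<le> p" "fold invert Xs A = B"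
    "real (length Xs) \<le> \<alpha> * real (card V) + 2 * \<beta>"
proof -
  have sg: "simple_graph V E" and acyclic: "\<nexists>vs. is_cycle E vs"
    using forest unfolding forest_def by auto
  have "E \<subseteq> Pow V" "finite V" using sg simple_graph_edgeD[OF sg] unfolding simple_graph_def by auto
  then have "finite E" by (simp add: finite_subset)
  have two_element: "\<forall>e\<in>E. \<exists>u v. u \<noteq> v \<and> e = {u,v}" using sg unfolding simple_graph_def by blast
  define agree where "agree u v \<longleftrightarrow> ((u,v) \<in> A \<longleftrightarrow> (u,v) \<in> B)" for u v
  have agree_commute: "agree v u \<longleftrightarrow> agree u v" if "{u,v} \<in> E" for u v
    using orientation_edge_iff[OF sg A that] orientation_edge_iff[OF sg B that]
    unfolding agree_def by blast
  obtain col :: "'a \<Rightarrow> bool"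
    where "\<forall>u v. {u,v} \<in> E \<longrightarrow> (col u \<noteq> col v \<longleftrightarrow> (\<forall>x y. {u,v} = {x,y} \<longrightarrow> agree x y))"
    using acyclic_labelling_coboundary[OF \<open>finite E\<close> two_element acyclic,
        of "\<lambda>e. \<forall>x y. e = {x,y} \<longrightarrow> agree x y"] by blast
  then have col: "col u \<noteq> col v \<longleftrightarrow> agree u v" if "{u,v} \<in> E" for u v
    using that agree_commute[OF that] by (auto simp: doubleton_eq_iff)
  define W1 where "W1 = {v \<in> V. col v}"
  define W2 where "W2 = {v \<in> V. \<not> col v}"
  have "W1 \<subseteq> V" "W2 \<subseteq> V" unfolding W1_def W2_def by auto
  obtain Xs1 where Xs1: "\<forall>X\<in>set Xs1. X \<subseteq> W1 \<and> card X \<le> p"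
    "\<And>u v. {u,v} \<in> E \<Longrightarrow> odd (inversion_count Xs1 u v) \<longleftrightarrow> u \<in> W1 \<and> v \<in> W1"
    "real (length Xs1) \<le> \<alpha> * real (card W1) + \<beta>"
    using inversion_sequence_within_subset[OF conv forest \<open>W1 \<subseteq> V\<close>] by blast
  obtain Xs2 where Xs2: "\<forall>X\<in>set Xs2. X \<subseteq> W2 \<and> card X \<le> p"
    "\<And>u v. {u,v} \<in> E \<Longrightarrow> odd (inversion_count Xs2 u v) \<longleftrightarrow> u \<in> W2 \<and> v \<in> W2"
    "real (length Xs2) \<le> \<alpha> * real (card W2) + \<beta>"
    using inversion_sequence_within_subset[OF conv forest \<open>W2 \<subseteq> V\<close>] by blast
  have "W1 \<union> W2 = V" "W1 \<inter> W2 = {}" unfolding W1_def W2_def by auto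
  then have "real (card V) = real (card W1) + real (card W2)"
    using \<open>finite V\<close> by (metis card_Un_disjoint finite_Un of_nat_add)
  then have "real (length (Xs1 @ Xs2)) \<le> \<alpha> * real (card V) + 2 * \<beta>"
    using Xs1(3) Xs2(3) by (simp add: distrib_left)
  moreover have "fold invert (Xs1 @ Xs2) A = B"
  proof (rule fold_invert_eq_orientation[OF sg A B])
    fix u v assume e: "{u,v} \<in> E"
    then have "u \<in> V" "v \<in> V" using simple_graph_edgeD[OF sg] by auto
    then have "u \<in> W1 \<longleftrightarrow> col u" "v \<in> W1 \<longleftrightarrow> col v" "u \<in> W2 \<longleftrightarrow> \<not> col u" "v \<in> W2 \<longleftrightarrow> \<not> col v"
      unfolding W1_def W2_def by auto
    then show "odd (inversion_count (Xs1 @ Xs2) u v) \<longleftrightarrow> ((u,v) \<in> A \<longleftrightarrow> (u,v) \<notin> B)"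
      using Xs1(2)[OF e] Xs2(2)[OF e] col[OF e]
      unfolding inversion_count_append agree_def by auto
  qed
  moreover have "\<forall>X\<in>set (Xs1 @ Xs2). X \<subseteq> V \<and> card X \<le> p"
    using Xs1(1) Xs2(1) unfolding W1_def W2_def by auto
  ultimately show ?thesis using that by blast
qed

theorem mainTheorem15:
  fixes p :: nat and \<alpha> \<beta> :: real
  assumes "p \<ge> 2"
    and "\<forall>n::nat. ereal_of_enat (conv_forest p n) \<le> ereal (\<alpha> * real n + \<beta>)"
  shows "\<forall>n::nat. ereal_of_enat (id_forest p n) \<le> ereal (\<alpha> * real n + 2 * \<beta>)"
proof
  fix n :: nat
  have "0 \<le> ereal (\<alpha> * real m + \<beta>)" for m
    using order_trans[OF ereal_of_enat_nonneg assms(2)[rule_format]] .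
  from this[of 0] this[of n] have bound_nonneg: "0 \<le> \<alpha> * real n + 2 * \<beta>" by simp
  have "id_forest p n \<le> enat (nat \<lfloor>\<alpha> * real n + 2 * \<beta>\<rfloor>)"
    unfolding id_forest_def idp_def
  proof (intro SUP_least, clarsimp)
    fix E A B assume "forest {..<n} E" "orientation E A" "orientation E B"
    then obtain Xs where Xs: "\<forall>X\<in>set Xs. X \<subseteq> {..<n} \<and> card X \<le> p" "fold invert Xs A = B"
      "real (length Xs) \<le> \<alpha> * real (card {..<n}) + 2 * \<beta>"
      by (rule orientations_inversion_sequence[OF assms(2)])
    have "inv_dist p {..<n} A B \<le> enat (length Xs)" using Xs(1,2) by (rule inv_dist_le_length)
    also have "length Xs \<le> nat \<lfloor>\<alpha> * real n + 2 * \<beta>\<rfloor>" using Xs(3) by (simp add: le_nat_floor)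
    finally show "inv_dist p {..<n} A B \<le> enat (nat \<lfloor>\<alpha> * real n + 2 * \<beta>\<rfloor>)" by simp
  qed
  then show "ereal_of_enat (id_forest p n) \<le> ereal (\<alpha> * real n + 2 * \<beta>)"
    using ereal_of_enat_le_ereal_iff[OF bound_nonneg] by simp
qed

end
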